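(* Let $K$ be an algebraically closed field of characteristic zero, $\mathcal{K}=K(t)$, $f(z) = z^2+t$, and $\alpha \in \mathcal{K}$. Then $\alpha$ does not realize portrait $(1,2)$ for $f$ if and only if $\alpha = 1/2$ or $\alpha$ satisfies condition $( * )$: \begin{itemize} \item $\alpha$ vanishes at $\mathfrak{p}_{-1}$; \item $\alpha^2 - \alpha + t + 1$ vanishes at $\mathfrak{p}_{-1}$, and possibly at $\mathfrak{p}_{-3/4}$, but at no other place; and \item if $\alpha^2 - \alpha + t + 1$ vanishes at $\mathfrak{p}_{-3/4}$, then $\alpha - 1/2$ also vanishes at $\mathfrak{p}_{-3/4}$. \end{itemize} Moreover, if in this case $\alpha^2-\alpha+t+1$ vanishes at $\mathfrak{p}_{-3/4}$, then it does so to order $1$.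
   Context: Places of $\mathcal{K}$ are those trivial on $K$, corresponding to $c\in\mathbb{P}^1(K)$; $\mathfrak{p}_c$ is the place at $t=c$, and an element vanishes at a place if its valuation there is positive. (Note $\alpha^2-\alpha+t+1 = \Phi_2(-\alpha,t)$ with $\Phi_2(z,t) = z^2+z+t+1$ the second dynatomic polynomial of $f$.) For $c \in K$, $f_c(z) = z^2+c$. A point $x$ has preperiodic portrait $(M,N)$ for $\phi$ if $M\ge0$ is minimal with $\phi^M(x)$ periodic and $\phi^M(x)$ has exact period $N$. We say $\alpha$ realizes portrait $(M,N)$ for $f$ if there exists $c \in K$ such that $\alpha(c)$ (reduction modulo $\mathfrak{p}_c$) has portrait $(M,N)$ for $f_c$. *)

theory Defs
  imports "HOL-Computational_Algebra.Polynomial" "HOL-Computational_Algebra.Fraction_Field"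
begin

text \<open>The rational function field K(t) is modelled as the fraction field
  'a poly fract of the polynomial ring K[t].  Places of K(t)/K correspond to
  points of P^1(K): a finite point c, or infinity.\<close>

datatype 'a place = Fin 'a | Infty

text \<open>Valuation of a nonzero rational function at a place, computed from any
  representation p/q (it is independent of the representation).\<close>
definition pval :: "'a::idom place \<Rightarrow> 'a poly \<Rightarrow> int" where
  "pval P p = (case P of Fin c \<Rightarrow> int (order c p) | Infty \<Rightarrow> - int (degree p))"

definition rf_val :: "'a::field place \<Rightarrow> 'a poly fract \<Rightarrow> int" where
  "rf_val P \<alpha> = (THE v. \<exists>p q. p \<noteq> 0 \<and> q \<noteq> 0 \<and> \<alpha> = Fract p q \<and> v = pval P p - pval P q)"

text \<open>An element vanishes at a place if its valuation there is positive
  (the zero element has valuation +infinity).\<close>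
definition vanishes_at :: "'a::field place \<Rightarrow> 'a poly fract \<Rightarrow> bool" where
  "vanishes_at P \<alpha> \<longleftrightarrow> \<alpha> = 0 \<or> rf_val P \<alpha> > 0"

definition regular_at :: "'a::field \<Rightarrow> 'a poly fract \<Rightarrow> bool" where
  "regular_at c \<alpha> \<longleftrightarrow> \<alpha> = 0 \<or> rf_val (Fin c) \<alpha> \<ge> 0"

definition eval_at :: "'a::field \<Rightarrow> 'a poly fract \<Rightarrow> 'a" where
  "eval_at c \<alpha> = (THE x. \<exists>p q. q \<noteq> 0 \<and> poly q c \<noteq> 0 \<and> \<alpha> = Fract p q \<and> x = poly p c / poly q c)"

definition tvar :: "'a::field poly fract" where
  "tvar = Fract [:0, 1:] 1"

definition is_periodic :: "('a \<Rightarrow> 'a) \<Rightarrow> 'a \<Rightarrow> bool" where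
  "is_periodic \<phi> y \<longleftrightarrow> (\<exists>n>0. (\<phi> ^^ n) y = y)"

definition exact_period :: "('a \<Rightarrow> 'a) \<Rightarrow> 'a \<Rightarrow> nat \<Rightarrow> bool" where
  "exact_period \<phi> y N \<longleftrightarrow> N > 0 \<and> (\<phi> ^^ N) y = y \<and> (\<forall>n. 0 < n \<and> n < N \<longrightarrow> (\<phi> ^^ n) y \<noteq> y)"

definition has_portrait :: "('a \<Rightarrow> 'a) \<Rightarrow> 'a \<Rightarrow> nat \<Rightarrow> nat \<Rightarrow> bool" where
  "has_portrait \<phi> x M N \<longleftrightarrow>
     is_periodic \<phi> ((\<phi> ^^ M) x) \<and> (\<forall>m<M. \<not> is_periodic \<phi> ((\<phi> ^^ m) x)) \<and>
     exact_period \<phi> ((\<phi> ^^ M) x) N"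

definition realizes :: "'a::field poly fract \<Rightarrow> nat \<Rightarrow> nat \<Rightarrow> bool" where
  "realizes \<alpha> M N \<longleftrightarrow>
     (\<exists>c. regular_at c \<alpha> \<and> has_portrait (\<lambda>z. z ^ 2 + c) (eval_at c \<alpha>) M N)"

end

theory Submission
  imports Defs
begin

text \<open>Write \<open>\<alpha> = p/q\<close> with \<open>p, q\<close> without common root.  The reduction \<open>x = p(c)/q(c)\<close> has
  portrait (1,2) for \<open>z\<^sup>2 + c\<close> iff \<open>x\<^sup>2 - x + c + 1 = 0\<close>, \<open>x \<noteq> 0\<close> and \<open>x \<noteq> 1/2\<close>, so \<open>\<alpha>\<close> fails to
  realize (1,2) iff at every root of the numerator \<open>N = p\<^sup>2 - pq + (t+1)q\<^sup>2\<close> of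
  \<open>\<alpha>\<^sup>2 - \<alpha> + t + 1\<close> one of \<open>p\<close> and \<open>r = 2p - q\<close> vanishes.  Completing the square,
  \<open>4N = r\<^sup>2 + (4t+3)q\<^sup>2\<close>, so a root of \<open>N\<close> killing \<open>p\<close> is \<open>-1\<close>, a root killing \<open>r\<close> is \<open>-3/4\<close>,
  and there \<open>N\<close> vanishes simply.  If \<open>r \<noteq> 0\<close> (i.e. \<open>\<alpha> \<noteq> 1/2\<close>), the roots of \<open>N\<close> cannot all
  be \<open>-3/4\<close>, so \<open>-1\<close> is one of them.\<close>

section \<open>Valuations and reductions of quotients of polynomials\<close>

lemma pval_mult: "x \<noteq> 0 \<Longrightarrow> y \<noteq> 0 \<Longrightarrow> pval P (x * y) = pval P x + pval P y"
  by (cases P) (auto simp: pval_def order_mult degree_mult_eq)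

lemma rf_val_Fract:
  fixes a b :: "'a::field poly"
  assumes "a \<noteq> 0" "b \<noteq> 0"
  shows "rf_val P (Fract a b) = pval P a - pval P b"
  unfolding rf_val_def
proof (rule the_equality)
  fix v assume "\<exists>p q. p \<noteq> 0 \<and> q \<noteq> 0 \<and> Fract a b = Fract p q \<and> v = pval P p - pval P q"
  then obtain p q where pq: "p \<noteq> 0" "q \<noteq> 0" "Fract a b = Fract p q" "v = pval P p - pval P q"
    by blast
  then have "pval P (a * q) = pval P (p * b)"
    using assms by (simp add: eq_fract)
  then show "v = pval P a - pval P b"
    using assms pq by (simp add: pval_mult)
qed (use assms in \<open>intro exI[of _ a] exI[of _ b], auto\<close>)

lemma eval_at_Fract:
  fixes a b :: "'a::field poly"
  assumes "poly b c \<noteq> 0"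
  shows "eval_at c (Fract a b) = poly a c / poly b c"
  unfolding eval_at_def
proof (rule the_equality)
  fix x assume "\<exists>p q. q \<noteq> 0 \<and> poly q c \<noteq> 0 \<and> Fract a b = Fract p q \<and> x = poly p c / poly q c"
  then obtain p q where pq: "q \<noteq> 0" "poly q c \<noteq> 0" "Fract a b = Fract p q" "x = poly p c / poly q c"
    by blast
  moreover have "b \<noteq> 0" using assms by auto
  ultimately have "a * q = p * b"
    by (simp add: eq_fract)
  then have "poly a c * poly q c = poly p c * poly b c"
    by (metis poly_mult)
  then show "x = poly a c / poly b c"
    using assms pq by (simp add: frac_eq_eq mult.commute)
qed (use assms in \<open>intro exI[of _ a] exI[of _ b], auto\<close>)

lemma Fract_eq_0_iff:
  fixes a b :: "'a::idom"
  shows "b \<noteq> 0 \<Longrightarrow> Fract a b = 0 \<longleftrightarrow> a = 0"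
  by (simp add: Zero_fract_def eq_fract)

lemma rf_val_Fin_Fract:
  fixes a b :: "'a::field poly"
  shows "a \<noteq> 0 \<Longrightarrow> b \<noteq> 0 \<Longrightarrow> rf_val (Fin c) (Fract a b) = int (order c a) - int (order c b)"
  by (simp add: rf_val_Fract pval_def)

lemma vanishes_at_Fin_Fract:
  fixes a b :: "'a::field poly"
  assumes "b \<noteq> 0" "poly a c \<noteq> 0 \<or> poly b c \<noteq> 0"
  shows "vanishes_at (Fin c) (Fract a b) \<longleftrightarrow> poly a c = 0"
  using assms order_root[of a c] order_root[of b c]
  by (cases "a = 0") (auto simp: vanishes_at_def Fract_eq_0_iff rf_val_Fin_Fract)

lemma regular_at_Fract:
  fixes a b :: "'a::field poly"
  assumes "b \<noteq> 0" "poly a c \<noteq> 0 \<or> poly b c \<noteq> 0"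
  shows "regular_at c (Fract a b) \<longleftrightarrow> poly b c \<noteq> 0"
  using assms order_root[of a c] order_root[of b c]
  by (cases "a = 0") (auto simp: regular_at_def Fract_eq_0_iff rf_val_Fin_Fract)

lemma not_vanishes_at_Infty_Fract:
  fixes a b :: "'a::field poly"
  assumes "b \<noteq> 0" "degree b < degree a"
  shows "\<not> vanishes_at Infty (Fract a b)"
proof -
  have "a \<noteq> 0" using assms by auto
  then show ?thesis
    using assms by (simp add: vanishes_at_def Fract_eq_0_iff rf_val_Fract pval_def)
qed

text \<open>A representation with denominator of least degree has no common root, since a common
  root \<open>c\<close> could be cancelled as the factor \<open>t - c\<close>.\<close>

lemma Fract_without_common_root:
  fixes \<alpha> :: "'a::field poly fract"
  obtains p q where "q \<noteq> 0" "\<alpha> = Fract p q" "\<And>c. poly p c \<noteq> 0 \<or> poly q c \<noteq> 0"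
proof -
  define S where "S = {n. \<exists>p q. q \<noteq> 0 \<and> \<alpha> = Fract p q \<and> degree q = n}"
  obtain p0 q0 where "\<alpha> = Fract p0 q0" "q0 \<noteq> 0" by (cases \<alpha>) auto
  then have "degree q0 \<in> S" unfolding S_def by blast
  then have "Least (\<lambda>n. n \<in> S) \<in> S" by (rule LeastI)
  then obtain p q where pq: "q \<noteq> 0" "\<alpha> = Fract p q" "degree q = Least (\<lambda>n. n \<in> S)"
    unfolding S_def by blast
  have "poly p c \<noteq> 0 \<or> poly q c \<noteq> 0" for c
  proof (rule ccontr)
    assume "\<not> (poly p c \<noteq> 0 \<or> poly q c \<noteq> 0)"
    then obtain p' q' where p': "p = [:-c, 1:] * p'" and q': "q = [:-c, 1:] * q'"
      by (auto simp: poly_eq_0_iff_dvd elim!: dvdE)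
    have "q' \<noteq> 0" using q' pq by auto
    moreover have "\<alpha> = Fract p' q'"
      using pq(2) p' q' mult_fract_cancel[of "[:-c, 1:]"] by simp
    ultimately have "Least (\<lambda>n. n \<in> S) \<le> degree q'"
      unfolding S_def by (blast intro: Least_le)
    moreover have "degree q = degree [:-c, 1:] + degree q'"
      unfolding q' by (rule degree_mult_eq) (use \<open>q' \<noteq> 0\<close> in auto)
    ultimately show False using pq by simp
  qed
  then show thesis using pq that by blast
qed

lemma half_fract: "(1 / 2 :: 'a::field_char_0 poly fract) = Fract 1 2"
proof -
  have two: "(2 :: 'a poly fract) = Fract 2 1" by (metis of_nat_fract of_nat_numeral)
  show ?thesis unfolding One_fract_def two divide_fract by simp
qed

section \<open>The portrait (1,2) for \<open>z\<^sup>2 + c\<close>\<close>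

lemma has_portrait_1_iff:
  "has_portrait \<phi> x 1 N \<longleftrightarrow> \<not> is_periodic \<phi> x \<and> exact_period \<phi> (\<phi> x) N"
  by (auto simp: has_portrait_def exact_period_def is_periodic_def)

lemma is_periodic_iff_of_exact_period:
  assumes "exact_period \<phi> (\<phi> x) N"
  shows "is_periodic \<phi> x \<longleftrightarrow> (\<phi> ^^ N) x = x"
proof
  assume "is_periodic \<phi> x"
  then obtain m where "(\<phi> ^^ Suc m) x = x"
    by (auto simp: is_periodic_def gr0_conv_Suc)
  then have x_on_cycle: "(\<phi> ^^ m) (\<phi> x) = x"
    by (simp only: funpow_Suc_right comp_apply)
  have "(\<phi> ^^ N) x = (\<phi> ^^ N) ((\<phi> ^^ m) (\<phi> x))"
    by (simp add: x_on_cycle)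
  also have "\<dots> = (\<phi> ^^ m) ((\<phi> ^^ N) (\<phi> x))"
    by (metis comp_apply funpow_add add.commute)
  also have "\<dots> = x"
    using assms x_on_cycle by (simp add: exact_period_def)
  finally show "(\<phi> ^^ N) x = x" .
qed (use assms in \<open>auto simp: exact_period_def is_periodic_def\<close>)

lemma exact_period_2_iff: "exact_period \<phi> y 2 \<longleftrightarrow> \<phi> (\<phi> y) = y \<and> \<phi> y \<noteq> y"
  by (auto simp: exact_period_def numeral_2_eq_2 less_Suc_eq)

lemma exact_period_2_quadratic_iff:
  fixes y c :: "'a::idom"
  shows "exact_period (\<lambda>z. z\<^sup>2 + c) y 2 \<longleftrightarrow> y\<^sup>2 + y + c + 1 = 0 \<and> 2 * y + 1 \<noteq> 0"
proof -
  define P where "P = y\<^sup>2 - y + c"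
  define Q where "Q = y\<^sup>2 + y + c + 1"
  have "((y\<^sup>2 + c)\<^sup>2 + c) - y = P * Q"
    by (simp add: P_def Q_def algebra_simps power2_eq_square)
  then have period_2: "(y\<^sup>2 + c)\<^sup>2 + c = y \<longleftrightarrow> P * Q = 0"
    by (metis eq_iff_diff_eq_0)
  have "(y\<^sup>2 + c) - y = P"
    by (simp add: P_def)
  then have fixed: "y\<^sup>2 + c = y \<longleftrightarrow> P = 0"
    by (metis eq_iff_diff_eq_0)
  have "P = Q - (2 * y + 1)"
    by (simp add: P_def Q_def algebra_simps)
  then show ?thesis
    unfolding exact_period_2_iff Q_def[symmetric] period_2 fixed by auto
qed

lemma portrait_1_2_iff:
  fixes x c :: "'a::field_char_0"
  shows "has_portrait (\<lambda>z. z\<^sup>2 + c) x 1 2 \<longleftrightarrow> x\<^sup>2 - x + c + 1 = 0 \<and> x \<noteq> 0 \<and> 2 * x \<noteq> 1"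
proof -
  let ?f = "\<lambda>z. z\<^sup>2 + c"
  define y where "y = ?f x"
  define A where "A = x\<^sup>2 + x + c + 1"
  define B where "B = x\<^sup>2 - x + c + 1"
  have A_eq: "A = B + 2 * x"
    by (simp add: A_def B_def)
  have "(?f ^^ 2) x = ?f y"
    by (simp add: y_def numeral_2_eq_2)
  then have "has_portrait ?f x 1 2 \<longleftrightarrow> exact_period ?f y 2 \<and> ?f y \<noteq> x"
    unfolding has_portrait_1_iff y_def using is_periodic_iff_of_exact_period[of ?f x 2] by auto
  also have "\<dots> \<longleftrightarrow> A * B = 0 \<and> 2 * B + (2 * x - 1) \<noteq> 0 \<and> A \<noteq> 0"
  proof -
    have factor: "y\<^sup>2 + y + c + 1 = A * B"
      by (simp add: y_def A_def B_def algebra_simps power2_eq_square)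
    have fixed: "2 * y + 1 = 2 * B + (2 * x - 1)"
      by (simp add: y_def B_def algebra_simps)
    have "?f y = x \<longleftrightarrow> A = 0" if "A * B = 0"
    proof -
      have "y\<^sup>2 + c - x = (y\<^sup>2 + y + c + 1) - A"
        by (simp add: y_def A_def algebra_simps)
      then have "y\<^sup>2 + c - x = - A"
        using that factor by simp
      then show ?thesis
        by (metis eq_iff_diff_eq_0 neg_equal_0_iff_equal)
    qed
    then show ?thesis
      unfolding exact_period_2_quadratic_iff factor fixed by blast
  qed
  also have "\<dots> \<longleftrightarrow> B = 0 \<and> x \<noteq> 0 \<and> 2 * x \<noteq> 1"
    unfolding A_eq by auto
  finally show ?thesis
    unfolding B_def .
qed

section \<open>The numerator of \<open>\<alpha>\<^sup>2 - \<alpha> + t + 1\<close>\<close>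

text \<open>For \<open>\<alpha> = p/q\<close> this is \<open>q\<^sup>2 \<cdot> (\<alpha>\<^sup>2 - \<alpha> + t + 1) = q\<^sup>2 \<cdot> \<Phi>\<^sub>2(-\<alpha>, t)\<close>.\<close>

definition dynatomic2_num :: "'a::comm_ring_1 poly \<Rightarrow> 'a poly \<Rightarrow> 'a poly" where
  "dynatomic2_num p q = p\<^sup>2 - p * q + [:1, 1:] * q\<^sup>2"

lemma poly_dynatomic2_num:
  "poly (dynatomic2_num p q) c = (poly p c)\<^sup>2 - poly p c * poly q c + (c + 1) * (poly q c)\<^sup>2"
  by (simp add: dynatomic2_num_def algebra_simps)

lemma smult_4_dynatomic2_num:
  fixes p q :: "'a::{idom,ring_char_0} poly"
  shows "smult 4 (dynatomic2_num p q) = (2 * p - q)\<^sup>2 + [:3, 4:] * q\<^sup>2"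
  by (simp add: poly_eq_poly_eq_iff[symmetric] fun_eq_iff poly_dynatomic2_num algebra_simps
      power2_eq_square)

lemma degree_square_plus_linear_square:
  fixes a b :: "'a::idom poly"
  assumes "b \<noteq> 0" "k1 \<noteq> 0"
  shows "2 * degree b + 1 \<le> degree (a\<^sup>2 + [:k0, k1:] * b\<^sup>2)"
proof -
  have "degree ([:k0, k1:] * b\<^sup>2) = degree [:k0, k1:] + degree (b\<^sup>2)"
    by (rule degree_mult_eq) (use assms in auto)
  also have "\<dots> = 2 * degree b + 1"
    using assms by (simp add: degree_power_eq)
  finally have linear_square: "degree ([:k0, k1:] * b\<^sup>2) = 2 * degree b + 1" .
  show ?thesis
  proof (cases "degree b < degree a")
    case True
    then have "degree (a\<^sup>2) = 2 * degree a"
      by (subst degree_power_eq) auto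
    with True linear_square show ?thesis
      by (subst degree_add_eq_left) auto
  next
    case False
    then have "degree (a\<^sup>2) < 2 * degree b + 1"
      using degree_power_le[of a 2] by simp
    with linear_square show ?thesis
      by (subst degree_add_eq_right) auto
  qed
qed

lemma degree_dynatomic2_num:
  fixes p q :: "'a::field_char_0 poly"
  assumes "q \<noteq> 0"
  shows "2 * degree q + 1 \<le> degree (dynatomic2_num p q)"
proof -
  have "2 * degree q + 1 \<le> degree ((2 * p - q)\<^sup>2 + [:3, 4:] * q\<^sup>2)"
    by (rule degree_square_plus_linear_square) (use assms in auto)
  then show ?thesis
    unfolding smult_4_dynatomic2_num[symmetric] by simp
qed

lemma dynatomic2_num_root_denom_nonzero:
  fixes p q :: "'a::idom poly"
  assumes "poly (dynatomic2_num p q) c = 0" "poly p c \<noteq> 0 \<or> poly q c \<noteq> 0"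
  shows "poly q c \<noteq> 0"
  using assms by (auto simp: poly_dynatomic2_num)

lemma dynatomic2_num_root_cases:
  fixes p q :: "'a::field_char_0 poly"
  assumes "poly (dynatomic2_num p q) c = 0" "poly q c \<noteq> 0"
    and "poly p c = 0 \<or> poly (2 * p - q) c = 0"
  shows "(c = -1 \<and> poly p c = 0) \<or> (c = -3/4 \<and> poly (2 * p - q) c = 0)"
  using assms(3)
proof
  assume "poly p c = 0"
  then have "(c + 1) * (poly q c)\<^sup>2 = 0"
    using assms(1) by (simp add: poly_dynatomic2_num)
  then show ?thesis
    using assms(2) \<open>poly p c = 0\<close> by (simp add: add_eq_0_iff2)
next
  assume r_root: "poly (2 * p - q) c = 0"
  have "(4 * c + 3) * (poly q c)\<^sup>2 = 4 * poly (dynatomic2_num p q) c - (poly (2 * p - q) c)\<^sup>2"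
    by (simp add: poly_dynatomic2_num algebra_simps power2_eq_square)
  then have "(4 * c + 3) * (poly q c)\<^sup>2 = 0"
    unfolding assms(1) r_root by simp
  then have "4 * c = -3"
    using assms(2) by (simp add: eq_neg_iff_add_eq_0)
  then have "c = -3/4"
    by (simp add: field_simps)
  then show ?thesis
    using r_root by simp
qed

lemma smult_4_dynatomic2_num_factor:
  fixes p q :: "'a::field_char_0 poly"
  assumes "poly (2 * p - q) (-3/4) = 0"
  obtains s where "2 * p - q = [:3/4, 1:] * s"
    and "smult 4 (dynatomic2_num p q) = [:3/4, 1:] * ((2 * q)\<^sup>2 + [:3/4, 1:] * s\<^sup>2)"
proof -
  have "[:3/4, 1:] dvd 2 * p - q"
    using assms by (simp add: dvd_iff_poly_eq_0)
  then obtain s where s: "2 * p - q = [:3/4, 1:] * s"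
    by (elim dvdE)
  have "smult 4 (dynatomic2_num p q) = [:3/4, 1:] * ((2 * q)\<^sup>2 + [:3/4, 1:] * s\<^sup>2)"
    unfolding smult_4_dynatomic2_num s
    by (simp add: poly_eq_poly_eq_iff[symmetric] fun_eq_iff algebra_simps power2_eq_square)
  with s that show thesis by blast
qed

lemma order_dynatomic2_num:
  fixes p q :: "'a::field_char_0 poly"
  assumes "poly (2 * p - q) (-3/4) = 0" "poly q (-3/4) \<noteq> 0"
  shows "order (-3/4) (dynatomic2_num p q) = 1"
proof -
  obtain s where factor:
      "smult 4 (dynatomic2_num p q) = [:3/4, 1:] * ((2 * q)\<^sup>2 + [:3/4, 1:] * s\<^sup>2)"
    using smult_4_dynatomic2_num_factor[OF assms(1)] by blast
  let ?M = "(2 * q)\<^sup>2 + [:3/4, 1:] * s\<^sup>2"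
  have "poly ?M (-3/4) \<noteq> 0"
    using assms(2) by simp
  then have "?M \<noteq> 0" and M_order: "order (-3/4) ?M = 0"
    by (metis poly_0, rule order_0I)
  then have nonzero: "[:3/4, 1::'a:] * ?M \<noteq> 0"
    by (metis mult_eq_0_iff pCons_eq_0_iff one_neq_zero)
  have linear_order: "order (-3/4) [:3/4, 1::'a:] = 1"
    using order_power_n_n[of "-3/4::'a" 1] by simp
  have "order (-3/4) (smult 4 (dynatomic2_num p q)) = 1"
    unfolding factor order_mult[OF nonzero] linear_order M_order by simp
  then show ?thesis
    by (simp add: order_smult)
qed

text \<open>Otherwise every root is \<open>-3/4\<close>; but the cofactor of \<open>t + 3/4\<close> in \<open>4N\<close> is nonconstant
  and does not vanish at \<open>-3/4\<close>.\<close>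

lemma dynatomic2_num_root_minus_one:
  fixes p q :: "'a::field_char_0 poly"
  assumes alg_closed: "\<forall>f :: 'a poly. degree f > 0 \<longrightarrow> (\<exists>x. poly f x = 0)"
    and "q \<noteq> 0" "2 * p - q \<noteq> 0" and coprime: "\<And>c. poly p c \<noteq> 0 \<or> poly q c \<noteq> 0"
    and degenerate: "\<And>c. poly (dynatomic2_num p q) c = 0 \<Longrightarrow> poly p c = 0 \<or> poly (2 * p - q) c = 0"
  shows "poly (dynatomic2_num p q) (-1) = 0"
proof (rule ccontr)
  assume N_minus_one: "poly (dynatomic2_num p q) (-1) \<noteq> 0"
  have root_cases: "c = -3/4 \<and> poly (2 * p - q) c = 0 \<and> poly q c \<noteq> 0"
    if root: "poly (dynatomic2_num p q) c = 0" for c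
  proof -
    have "poly q c \<noteq> 0"
      using dynatomic2_num_root_denom_nonzero[OF root coprime] .
    moreover have "c \<noteq> -1"
      using root N_minus_one by blast
    ultimately show ?thesis
      using dynatomic2_num_root_cases[OF root _ degenerate[OF root]] by blast
  qed
  have "degree (dynatomic2_num p q) > 0"
    using degree_dynatomic2_num[OF \<open>q \<noteq> 0\<close>, of p] by linarith
  then obtain c0 where "poly (dynatomic2_num p q) c0 = 0"
    using alg_closed by blast
  then have r_root: "poly (2 * p - q) (-3/4) = 0" and q_nonzero: "poly q (-3/4) \<noteq> 0"
    using root_cases by auto
  obtain s where s: "2 * p - q = [:3/4, 1:] * s"
    and factor: "smult 4 (dynatomic2_num p q) = [:3/4, 1:] * ((2 * q)\<^sup>2 + [:3/4, 1:] * s\<^sup>2)"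
    using smult_4_dynatomic2_num_factor[OF r_root] by blast
  let ?M = "(2 * q)\<^sup>2 + [:3/4, 1:] * s\<^sup>2"
  have "s \<noteq> 0" using s assms(3) by auto
  then have "degree ?M > 0"
    using degree_square_plus_linear_square[of s 1 "2 * q" "3/4"] by simp
  then obtain c1 where M_root: "poly ?M c1 = 0"
    using alg_closed by blast
  then have "poly (smult 4 (dynatomic2_num p q)) c1 = 0"
    unfolding factor by simp
  then have "c1 = -3/4"
    using root_cases by simp
  then show False
    using M_root q_nonzero by simp
qed

lemma dynatomic2_num_degenerate_iff:
  fixes p q :: "'a::field_char_0 poly"
  assumes alg_closed: "\<forall>f :: 'a poly. degree f > 0 \<longrightarrow> (\<exists>x. poly f x = 0)"
    and "q \<noteq> 0" and coprime: "\<And>c. poly p c \<noteq> 0 \<or> poly q c \<noteq> 0"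
  defines "N \<equiv> dynatomic2_num p q" and "r \<equiv> 2 * p - q"
  shows "(\<forall>c. poly N c = 0 \<longrightarrow> poly p c = 0 \<or> poly r c = 0) \<longleftrightarrow>
    r = 0 \<or>
    (poly p (-1) = 0 \<and> poly N (-1) = 0 \<and> (\<forall>c. poly N c = 0 \<longrightarrow> c = -1 \<or> c = -3/4) \<and>
     (poly N (-3/4) = 0 \<longrightarrow> poly r (-3/4) = 0))"
    (is "?degenerate \<longleftrightarrow> ?condition")
proof -
  have root_cases: "(c = -1 \<and> poly p c = 0) \<or> (c = -3/4 \<and> poly r c = 0)"
    if "poly N c = 0" "poly p c = 0 \<or> poly r c = 0" for c
    using dynatomic2_num_root_cases dynatomic2_num_root_denom_nonzero coprime that
    unfolding N_def r_def by blast
  have "(-1::'a) \<noteq> -3/4"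
    by simp
  show ?thesis
  proof (cases "r = 0")
    case False
    show ?thesis
    proof
      assume degenerate: ?degenerate
      then have "poly N (-1) = 0"
        using dynatomic2_num_root_minus_one[OF alg_closed \<open>q \<noteq> 0\<close>] False coprime
        unfolding N_def r_def by blast
      with degenerate root_cases \<open>(-1::'a) \<noteq> -3/4\<close> show ?condition
        by metis
    next
      assume ?condition
      with False root_cases show ?degenerate
        by blast
    qed
  qed simp
qed

lemma Fract_dynatomic2_num:
  fixes p q :: "'a::field poly"
  assumes "q \<noteq> 0"
  shows "(Fract p q)\<^sup>2 - Fract p q + tvar + 1 = Fract (dynatomic2_num p q) (q\<^sup>2)"
  using assms unfolding tvar_def
  by (simp add: power2_eq_square One_fract_def eq_fract dynatomic2_num_def algebra_simps)

lemma Fract_minus_half: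
  fixes p q :: "'a::field_char_0 poly"
  assumes "q \<noteq> 0"
  shows "Fract p q - 1/2 = Fract (2 * p - q) (2 * q)"
  using assms unfolding half_fract by (simp add: eq_fract algebra_simps)

lemma Fract_eq_half_iff:
  fixes p q :: "'a::field_char_0 poly"
  assumes "q \<noteq> 0"
  shows "Fract p q = 1/2 \<longleftrightarrow> 2 * p - q = 0"
  using assms unfolding half_fract by (simp add: eq_fract algebra_simps)

lemma vanishes_at_Fract_dynatomic2_iff:
  fixes p q :: "'a::field_char_0 poly"
  assumes "q \<noteq> 0" "\<And>c. poly p c \<noteq> 0 \<or> poly q c \<noteq> 0"
  shows "vanishes_at P ((Fract p q)\<^sup>2 - Fract p q + tvar + 1) \<longleftrightarrow>
    (\<exists>c. P = Fin c \<and> poly (dynatomic2_num p q) c = 0)"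
proof (cases P)
  case (Fin c)
  have "poly (dynatomic2_num p q) c \<noteq> 0 \<or> poly (q\<^sup>2) c \<noteq> 0"
    using dynatomic2_num_root_denom_nonzero[OF _ assms(2)] by auto
  then show ?thesis
    unfolding Fin Fract_dynatomic2_num[OF assms(1)]
    using assms(1) by (simp add: vanishes_at_Fin_Fract)
next
  case Infty
  have "degree (q\<^sup>2) < degree (dynatomic2_num p q)"
    using degree_dynatomic2_num[OF assms(1), of p] assms(1) by (simp add: degree_power_eq)
  then show ?thesis
    unfolding Infty Fract_dynatomic2_num[OF assms(1)]
    using assms(1) by (simp add: not_vanishes_at_Infty_Fract)
qed

lemma not_realizes_1_2_Fract_iff:
  fixes p q :: "'a::field_char_0 poly"
  assumes "q \<noteq> 0" and coprime: "\<And>c. poly p c \<noteq> 0 \<or> poly q c \<noteq> 0"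
  shows "\<not> realizes (Fract p q) 1 2 \<longleftrightarrow>
    (\<forall>c. poly (dynatomic2_num p q) c = 0 \<longrightarrow> poly p c = 0 \<or> poly (2 * p - q) c = 0)"
proof -
  have "regular_at c (Fract p q) \<and> has_portrait (\<lambda>z. z\<^sup>2 + c) (eval_at c (Fract p q)) 1 2 \<longleftrightarrow>
      poly (dynatomic2_num p q) c = 0 \<and> poly p c \<noteq> 0 \<and> poly (2 * p - q) c \<noteq> 0" for c
  proof (cases "poly q c = 0")
    case True
    then show ?thesis
      using regular_at_Fract[OF assms] dynatomic2_num_root_denom_nonzero[OF _ coprime] by blast
  next
    case False
    define x where "x = poly p c / poly q c"
    have "(x\<^sup>2 - x + c + 1) * (poly q c)\<^sup>2 = poly (dynatomic2_num p q) c"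
      using False by (simp add: x_def poly_dynatomic2_num field_simps power2_eq_square)
    then have "x\<^sup>2 - x + c + 1 = 0 \<longleftrightarrow> poly (dynatomic2_num p q) c = 0"
      using False by (metis mult_eq_0_iff power_eq_0_iff)
    moreover have "x \<noteq> 0 \<longleftrightarrow> poly p c \<noteq> 0" and "2 * x \<noteq> 1 \<longleftrightarrow> poly (2 * p - q) c \<noteq> 0"
      using False by (simp_all add: x_def field_simps)
    moreover have "regular_at c (Fract p q)" and "eval_at c (Fract p q) = x"
      using False regular_at_Fract[OF assms] eval_at_Fract[OF False] by (simp_all add: x_def)
    ultimately show ?thesis
      using portrait_1_2_iff[of c x] by simp
  qed
  then show ?thesis
    unfolding realizes_def by blast
qed

lemma vanishing_conditions_Fract_iff:
  fixes p q :: "'a::field_char_0 poly"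
  assumes "q \<noteq> 0" and coprime: "\<And>c. poly p c \<noteq> 0 \<or> poly q c \<noteq> 0"
  defines "\<alpha> \<equiv> Fract p q"
  defines "D \<equiv> \<alpha>\<^sup>2 - \<alpha> + tvar + 1"
  shows "(vanishes_at (Fin (-1)) \<alpha> \<and> vanishes_at (Fin (-1)) D \<and>
      (\<forall>P. vanishes_at P D \<longrightarrow> P = Fin (-1) \<or> P = Fin (-3/4)) \<and>
      (vanishes_at (Fin (-3/4)) D \<longrightarrow> vanishes_at (Fin (-3/4)) (\<alpha> - 1/2))) \<longleftrightarrow>
    (poly p (-1) = 0 \<and> poly (dynatomic2_num p q) (-1) = 0 \<and>
      (\<forall>c. poly (dynatomic2_num p q) c = 0 \<longrightarrow> c = -1 \<or> c = -3/4) \<and>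
      (poly (dynatomic2_num p q) (-3/4) = 0 \<longrightarrow> poly (2 * p - q) (-3/4) = 0))"
proof -
  have vanishes_D: "vanishes_at P D \<longleftrightarrow> (\<exists>c. P = Fin c \<and> poly (dynatomic2_num p q) c = 0)" for P
    unfolding D_def \<alpha>_def by (rule vanishes_at_Fract_dynatomic2_iff[OF assms(1) coprime])
  have "vanishes_at (Fin c) \<alpha> \<longleftrightarrow> poly p c = 0" for c
    unfolding \<alpha>_def using assms(1) coprime by (rule vanishes_at_Fin_Fract)
  moreover have "vanishes_at (Fin c) (\<alpha> - 1/2) \<longleftrightarrow> poly (2 * p - q) c = 0"
    if "poly (dynatomic2_num p q) c = 0" for c
    using assms(1) dynatomic2_num_root_denom_nonzero[OF that coprime]
    unfolding \<alpha>_def Fract_minus_half[OF assms(1)] by (simp add: vanishes_at_Fin_Fract)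
  ultimately show ?thesis
    unfolding vanishes_D by auto
qed

lemma rf_val_Fract_dynatomic2:
  fixes p q :: "'a::field_char_0 poly"
  assumes "q \<noteq> 0" and coprime: "\<And>c. poly p c \<noteq> 0 \<or> poly q c \<noteq> 0"
    and degenerate: "\<forall>c. poly (dynatomic2_num p q) c = 0 \<longrightarrow> poly p c = 0 \<or> poly (2 * p - q) c = 0"
  defines "D \<equiv> (Fract p q)\<^sup>2 - Fract p q + tvar + 1"
  assumes vanishes: "vanishes_at (Fin (-3/4)) D"
  shows "D \<noteq> 0 \<and> rf_val (Fin (-3/4)) D = 1"
proof -
  have N_root: "poly (dynatomic2_num p q) (-3/4) = 0"
    using vanishes vanishes_at_Fract_dynatomic2_iff[OF assms(1) coprime] unfolding D_def by simp
  then have q_nonzero: "poly q (-3/4) \<noteq> 0"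
    using dynatomic2_num_root_denom_nonzero coprime by blast
  have "poly (2 * p - q) (-3/4) = 0"
    using dynatomic2_num_root_cases[OF N_root q_nonzero] degenerate N_root by force
  then have "order (-3/4) (dynatomic2_num p q) = 1"
    using order_dynatomic2_num q_nonzero by blast
  moreover have "dynatomic2_num p q \<noteq> 0"
    using degree_dynatomic2_num[OF assms(1), of p] by auto
  moreover have "order (-3/4) (q\<^sup>2) = 0"
    using q_nonzero by (simp add: order_0I)
  ultimately show ?thesis
    unfolding D_def Fract_dynatomic2_num[OF assms(1)]
    using assms(1) by (simp add: Fract_eq_0_iff rf_val_Fin_Fract)
qed

theorem lemma5p13:
  fixes \<alpha> :: "'a::field_char_0 poly fract"
  assumes alg_closed: "\<forall>p :: 'a poly. degree p > 0 \<longrightarrow> (\<exists>x. poly p x = 0)"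
  defines "D \<equiv> \<alpha>\<^sup>2 - \<alpha> + tvar + 1"
  shows "(\<not> realizes \<alpha> 1 2 \<longleftrightarrow>
           \<alpha> = 1 / 2 \<or>
           (vanishes_at (Fin (-1)) \<alpha> \<and>
            vanishes_at (Fin (-1)) D \<and>
            (\<forall>P. vanishes_at P D \<longrightarrow> P = Fin (-1) \<or> P = Fin (-3/4)) \<and>
            (vanishes_at (Fin (-3/4)) D \<longrightarrow> vanishes_at (Fin (-3/4)) (\<alpha> - 1/2))))
       \<and> (\<not> realizes \<alpha> 1 2 \<and> vanishes_at (Fin (-3/4)) D \<longrightarrow>
            D \<noteq> 0 \<and> rf_val (Fin (-3/4)) D = 1)"
proof -
  obtain p q where q: "q \<noteq> 0" and \<alpha>: "\<alpha> = Fract p q"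
    and coprime: "\<And>c. poly p c \<noteq> 0 \<or> poly q c \<noteq> 0"
    using Fract_without_common_root[of \<alpha>] by blast
  show ?thesis
    using dynatomic2_num_degenerate_iff[OF alg_closed q coprime] rf_val_Fract_dynatomic2[OF q coprime]
    unfolding D_def \<alpha> vanishing_conditions_Fract_iff[OF q coprime] Fract_eq_half_iff[OF q]
      not_realizes_1_2_Fract_iff[OF q coprime]
    by blast
qed

end
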